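(* In the Box-iLQR backward pass, let the feedback gain be $\mathbf{K}_t=-(Q_{\mathbf{uu}}+\zeta\mathbf{I})^{-1}Q_{\mathbf{ux}}$ with $Q_{\mathbf{uu}}=C_{\mathbf{uu}}+\boldsymbol{\omega}_{\mathbf{uu}}+\mathbf{F}_{\mathbf{u}}^\top\mathbf{S}_{t+1}\mathbf{F}_{\mathbf{u}}$ and $Q_{\mathbf{ux}}=C_{\mathbf{ux}}+\mathbf{F}_{\mathbf{u}}^\top\mathbf{S}_{t+1}\mathbf{F}_{\mathbf{x}}$, and consider the feedback law $\mathbf{u}_t=\mathbf{u}_t^*+\mathbf{K}_t^*(\mathbf{x}_t-\mathbf{x}_t^* )$ built from the optimal trajectory $(\mathbf{x}^*,\mathbf{u}^* )$ and the gains $\mathbf{K}_t^*$ at that trajectory. This feedback controller inherently respects the control saturation limits $\underline{u}_j\le u_{t,j}\le\bar{u}_j$ ($j\in\mathcal{I}_u$): specifically, if an optimal control input $u_{t,j}$ is saturated at its boundary (i.e. approaches $\underline{u}_j$ or $\bar{u}_j$), then the corresponding ($j$-th) row of the feedback matrix $\mathbf{K}_t$ is the zero vector.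
   Context: Setting: discrete-time dynamics $\mathbf{x}_{t+1}=\mathbf{F}(\mathbf{x}_t,\mathbf{u}_t)$, $\mathbf{x}_t\in\mathbb{R}^n$, $\mathbf{u}_t\in\mathbb{R}^m$, stage cost $C$, with box constraints on control components $j\in\mathcal{I}_u$ handled by the log-barrier $-\sum_{j\in\mathcal{I}_u}\sigma_j(\log(u_j-\underline{u}_j)+\log(\bar{u}_j-u_j))$ (and analogous state barriers with parameters $\mu_i$), $\sigma_j>0$. Thus $\boldsymbol{\omega}_{\mathbf{uu}}$ is diagonal with $(\boldsymbol{\omega}_{\mathbf{uu}})_{jj}=\sigma_j\big(\frac{1}{(u_{t,j}-\underline{u}_j)^2}+\frac{1}{(\bar{u}_j-u_{t,j})^2}\big)$ for $j\in\mathcal{I}_u$ and zero otherwise. $\mathbf{S}_{t+1}$ is the value-function Hessian from the iLQR Riccati recursion ($\mathbf{S}_T=\Phi_{\mathbf{xx}}+\boldsymbol{\Omega}_{\mathbf{xx}}$, $\mathbf{S}_t=Q_{\mathbf{xx}}+\mathbf{K}_t^\top Q_{\mathbf{uu}}\mathbf{K}_t+\mathbf{K}_t^\top Q_{\mathbf{ux}}+Q_{\mathbf{ux}}^\top\mathbf{K}_t$, $Q_{\mathbf{xx}}=C_{\mathbf{xx}}+\boldsymbol{\omega}_{\mathbf{xx}}+\mathbf{F}_{\mathbf{x}}^\top\mathbf{S}_{t+1}\mathbf{F}_{\mathbf{x}}$), $\zeta\ge0$ is a regularization constant, and all derivatives are evaluated at the current trajectory. "Saturated" is understood in the limiting sense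 that the distance of $u_{t,j}$ to a bound tends to zero, so $(\boldsymbol{\omega}_{\mathbf{uu}})_{jj}\to\infty$. *)

theory Defs
  imports "HOL-Analysis.Analysis"
begin

definition omega_uu :: "('m \<Rightarrow> real) \<Rightarrow> 'm set \<Rightarrow> ('m \<Rightarrow> real) \<Rightarrow> ('m \<Rightarrow> real)
    \<Rightarrow> real^'m \<Rightarrow> real^'m^'m" where
  "omega_uu \<sigma> Iu lo hi u =
     (\<chi> i k. if i = k \<and> i \<in> Iu
              then \<sigma> i * (1 / (u$i - lo i)^2 + 1 / (hi i - u$i)^2) else 0)"

definition Q_uu :: "real^'m^'m \<Rightarrow> real^'m^'m \<Rightarrow> real^'m^'n \<Rightarrow> real^'n^'n \<Rightarrow> real^'m^'m" where
  "Q_uu Cuu Wuu Fu S = Cuu + Wuu + transpose Fu ** S ** Fu"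

definition Q_ux :: "real^'n^'m \<Rightarrow> real^'m^'n \<Rightarrow> real^'n^'n \<Rightarrow> real^'n^'n \<Rightarrow> real^'n^'m" where
  "Q_ux Cux Fu S Fx = Cux + transpose Fu ** S ** Fx"

definition gain :: "real^'m^'m \<Rightarrow> real \<Rightarrow> real^'n^'m \<Rightarrow> real^'n^'m" where
  "gain Quu \<zeta> Qux = - (matrix_inv (Quu + \<zeta> *\<^sub>R mat 1) ** Qux)"

definition pos_def :: "real^'m^'m \<Rightarrow> bool" where
  "pos_def M \<longleftrightarrow> (\<forall>x. x \<noteq> 0 \<longrightarrow> x \<bullet> (M *v x) > 0)"

definition upd_comp :: "real^'m \<Rightarrow> 'm \<Rightarrow> real \<Rightarrow> real^'m" where
  "upd_comp u j v = (\<chi> i. if i = j then v else u $ i)"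

end

theory Submission
  imports Defs "HOL-Real_Asymp.Real_Asymp"
begin

text \<open>
  The matrix \<open>Q\<^sub>u\<^sub>u + \<zeta>I\<close> depends on the control component \<open>u\<^sub>j\<close> only through the
  \<open>(j,j)\<close> entry of the barrier Hessian, so along \<open>u\<^sub>j \<rightarrow> lo\<^sub>j\<close> or \<open>u\<^sub>j \<rightarrow> hi\<^sub>j\<close> it has the form
  \<open>B + t E\<^sub>j\<^sub>j\<close> with \<open>t \<rightarrow> \<infinity>\<close>. If \<open>x \<bullet> B x \<ge> c |x|\<^sup>2\<close>, the \<open>j\<close>-th row \<open>y\<close> of
  \<open>(B + t E\<^sub>j\<^sub>j)\<^sup>-\<^sup>1\<close> satisfies \<open>y \<bullet> (B + t E\<^sub>j\<^sub>j) y = y\<^sub>j\<close>, hence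
  \<open>c |y|\<^sup>2 \<le> y\<^sub>j - t y\<^sub>j\<^sup>2 \<le> 1/(4t)\<close>. So that row of the inverse, and with it the \<open>j\<close>-th row
  of the gain \<open>K = -(Q\<^sub>u\<^sub>u + \<zeta>I)\<^sup>-\<^sup>1 Q\<^sub>u\<^sub>x\<close>, tends to zero.
\<close>

definition diag_unit_matrix :: "'m \<Rightarrow> real^'m^'m" where
  "diag_unit_matrix j = (\<chi> i k. if i = j \<and> k = j then 1 else 0)"

definition barrier_curvature :: "real \<Rightarrow> real \<Rightarrow> real \<Rightarrow> real \<Rightarrow> real" where
  "barrier_curvature s l h v = s * (1 / (v - l)^2 + 1 / (h - v)^2)"

lemma diag_unit_matrix_mult_vec: "diag_unit_matrix j *v x = axis j (x $ j)"
  by (auto simp: diag_unit_matrix_def vec_eq_iff matrix_vector_mult_def axis_def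
      if_distrib[of "\<lambda>a. a * _"] cong: if_cong)

lemma quadratic_form_add_diag_unit:
  "x \<bullet> ((B + t *\<^sub>R diag_unit_matrix j) *v x) = x \<bullet> (B *v x) + t * (x $ j)^2"
proof -
  have "(B + t *\<^sub>R diag_unit_matrix j) *v x = B *v x + t *\<^sub>R (diag_unit_matrix j *v x)"
    by (simp add: algebra_simps scaleR_matrix_vector_assoc)
  then show ?thesis
    by (simp add: diag_unit_matrix_mult_vec inner_add_right inner_axis power2_eq_square)
qed

lemma pos_def_imp_coercive:
  fixes B :: "real^'m^'m"
  assumes "pos_def B"
  obtains c where "c > 0" and "\<And>x. c * (norm x)^2 \<le> x \<bullet> (B *v x)"
proof -
  let ?q = "\<lambda>x::real^'m. x \<bullet> (B *v x)"
  have "sphere (0::real^'m) 1 \<noteq> {}"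
    by (metis empty_iff mem_sphere_0 norm_axis_1)
  moreover have "continuous_on (sphere 0 1) ?q"
    by (intro continuous_intros)
  ultimately obtain x0 where x0: "x0 \<in> sphere 0 1" "\<And>y. y \<in> sphere 0 1 \<Longrightarrow> ?q x0 \<le> ?q y"
    using continuous_attains_inf[OF compact_sphere] by blast
  then have "?q x0 > 0"
    using assms unfolding pos_def_def by (metis mem_sphere_0 norm_zero zero_neq_one)
  moreover have "?q x0 * (norm x)^2 \<le> ?q x" for x
  proof (cases "x = 0")
    case False
    define y where "y = (1 / norm x) *\<^sub>R x"
    have "y \<in> sphere 0 1"
      using False by (simp add: y_def)
    then have "?q x0 \<le> ?q y"
      using x0(2) by blast
    moreover have "?q x = (norm x)^2 * ?q y"
      using False by (simp add: y_def matrix_vector_mult_scaleR power2_eq_square)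
    ultimately show ?thesis
      by (simp add: mult.commute mult_right_mono)
  qed simp
  ultimately show thesis
    using that by blast
qed

lemma invertible_if_coercive:
  fixes A :: "real^'m^'m"
  assumes "c > 0" and "\<And>x. c * (norm x)^2 \<le> x \<bullet> (A *v x)"
  shows "invertible A"
proof -
  have "x = 0" if "A *v x = 0" for x
    using assms(2)[of x] that \<open>c > 0\<close> by (simp add: mult_le_0_iff)
  then show ?thesis
    using matrix_left_invertible_ker invertible_left_inverse by blast
qed

lemma matrix_inv_row_quadratic_form:
  fixes A :: "real^'m^'m"
  assumes "invertible A"
  shows "(matrix_inv A $ j) \<bullet> (A *v (matrix_inv A $ j)) = matrix_inv A $ j $ j"
proof -
  have "matrix_inv A ** A = mat 1"
    using assms unfolding invertible_def matrix_inv_def by (rule someI2_ex) auto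
  then have "matrix_inv A $ j v* A = axis j 1"
    by (simp add: vec_eq_iff matrix_matrix_mult_def vector_matrix_mult_def mat_def axis_def)
  then show ?thesis
    by (simp flip: dot_lmul_matrix add: inner_axis')
qed

lemma norm_matrix_inv_row_add_diag_unit_le:
  fixes B :: "real^'m^'m"
  assumes "c > 0" and coercive: "\<And>x. c * (norm x)^2 \<le> x \<bullet> (B *v x)" and "t > 0"
  shows "(norm (matrix_inv (B + t *\<^sub>R diag_unit_matrix j) $ j))^2 \<le> 1 / (4 * c * t)"
proof -
  define A where "A = B + t *\<^sub>R diag_unit_matrix j"
  define y where "y = matrix_inv A $ j"
  have coercive_A: "c * (norm x)^2 + t * (x $ j)^2 \<le> x \<bullet> (A *v x)" for x
    using coercive[of x] quadratic_form_add_diag_unit[of x B t j] unfolding A_def by linarith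
  have "c * (norm x)^2 \<le> x \<bullet> (A *v x)" for x
  proof -
    have "0 \<le> t * (x $ j)^2"
      using \<open>t > 0\<close> by simp
    then show ?thesis
      using coercive_A[of x] by linarith
  qed
  then have "y \<bullet> (A *v y) = y $ j"
    unfolding y_def by (intro matrix_inv_row_quadratic_form invertible_if_coercive[OF \<open>c > 0\<close>])
  then have "c * (norm y)^2 \<le> y $ j - t * (y $ j)^2"
    using coercive_A[of y] by simp
  also have "\<dots> = 1 / (4 * t) - (2 * t * y $ j - 1)^2 / (4 * t)"
    using \<open>t > 0\<close> by (simp add: field_simps power2_eq_square)
  also have "\<dots> \<le> 1 / (4 * t)"
    using \<open>t > 0\<close> by simp
  finally show ?thesis
    using \<open>c > 0\<close> \<open>t > 0\<close> by (simp add: A_def y_def field_simps)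
qed

lemma matrix_inv_row_add_diag_unit_tendsto_0:
  fixes B :: "real^'m^'m"
  assumes "pos_def (B + t0 *\<^sub>R diag_unit_matrix j)" and "filterlim t at_top F"
  shows "((\<lambda>v. matrix_inv (B + t v *\<^sub>R diag_unit_matrix j) $ j) \<longlongrightarrow> 0) F"
proof -
  let ?B0 = "B + t0 *\<^sub>R diag_unit_matrix j"
  obtain c where "c > 0" and coercive: "\<And>x. c * (norm x)^2 \<le> x \<bullet> (?B0 *v x)"
    using pos_def_imp_coercive[OF assms(1)] by blast
  define s where "s v = t v - t0" for v
  have shift: "B + t v *\<^sub>R diag_unit_matrix j = ?B0 + s v *\<^sub>R diag_unit_matrix j" for v
    by (simp add: s_def algebra_simps)
  have s_at_top: "filterlim s at_top F"
    using filterlim_tendsto_add_at_top[OF tendsto_const assms(2), of "- t0"]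
    unfolding s_def by simp
  have "\<forall>\<^sub>F v in F. norm (matrix_inv (B + t v *\<^sub>R diag_unit_matrix j) $ j)
                    \<le> sqrt (1 / (4 * c * s v))"
    using s_at_top unfolding filterlim_at_top_dense
  proof (rule allE[where x = 0], elim eventually_mono)
    fix v assume "0 < s v"
    have "(norm (matrix_inv (B + t v *\<^sub>R diag_unit_matrix j) $ j))^2 \<le> 1 / (4 * c * s v)"
      unfolding shift
      by (rule norm_matrix_inv_row_add_diag_unit_le[OF \<open>c > 0\<close> coercive \<open>0 < s v\<close>])
    then show "norm (matrix_inv (B + t v *\<^sub>R diag_unit_matrix j) $ j)
                 \<le> sqrt (1 / (4 * c * s v))"
      by (rule real_le_rsqrt)
  qed
  moreover have "filterlim (\<lambda>v. 4 * c * s v) at_infinity F"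
    using filterlim_tendsto_pos_mult_at_top[OF tendsto_const _ s_at_top] \<open>c > 0\<close>
    by (intro filterlim_at_top_imp_at_infinity) simp
  then have "((\<lambda>v. sqrt (1 / (4 * c * s v))) \<longlongrightarrow> 0) F"
    using tendsto_real_sqrt[OF tendsto_divide_0[OF tendsto_const]] by simp
  ultimately show ?thesis
    by (rule Lim_null_comparison)
qed

lemma gain_row: "gain Quu \<zeta> Qux $ j = - (matrix_inv (Quu + \<zeta> *\<^sub>R mat 1) $ j v* Qux)"
  by (simp add: gain_def vec_eq_iff matrix_matrix_mult_def vector_matrix_mult_def)

lemma gain_row_tendsto_0:
  assumes "pos_def (Quu + t0 *\<^sub>R diag_unit_matrix j + \<zeta> *\<^sub>R mat 1)" and "filterlim t at_top F"
  shows "((\<lambda>v. gain (Quu + t v *\<^sub>R diag_unit_matrix j) \<zeta> Qux $ j) \<longlongrightarrow> 0) F"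
proof -
  have "pos_def ((Quu + \<zeta> *\<^sub>R mat 1) + t0 *\<^sub>R diag_unit_matrix j)"
    using assms(1) by (simp add: algebra_simps)
  from matrix_inv_row_add_diag_unit_tendsto_0[OF this assms(2)]
  have "((\<lambda>v. transpose Qux *v (matrix_inv (Quu + t v *\<^sub>R diag_unit_matrix j + \<zeta> *\<^sub>R mat 1) $ j))
          \<longlongrightarrow> 0) F"
    by (intro bounded_linear.tendsto_zero[OF matrix_vector_mul_bounded_linear])
      (simp add: algebra_simps)
  from tendsto_minus[OF this] show ?thesis
    by (simp add: gain_row)
qed

lemma omega_uu_upd_comp:
  assumes "j \<in> Iu"
  shows "omega_uu \<sigma> Iu lo hi (upd_comp u j v) =
    omega_uu \<sigma> (Iu - {j}) lo hi u
    + barrier_curvature (\<sigma> j) (lo j) (hi j) v *\<^sub>R diag_unit_matrix j"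
proof -
  have "omega_uu \<sigma> Iu lo hi (upd_comp u j v) $ i $ k =
      omega_uu \<sigma> (Iu - {j}) lo hi u $ i $ k
      + (if i = j \<and> k = j then barrier_curvature (\<sigma> j) (lo j) (hi j) v else 0)" for i k
    using assms by (cases "i = k"; cases "i = j")
      (simp_all add: omega_uu_def upd_comp_def barrier_curvature_def)
  then show ?thesis
    by (simp add: vec_eq_iff diag_unit_matrix_def)
qed

lemma barrier_curvature_at_lower_bound:
  assumes "s > 0" and "l < h"
  shows "filterlim (barrier_curvature s l h) at_top (at_right l)"
  unfolding barrier_curvature_def using assms by real_asymp

lemma barrier_curvature_at_upper_bound:
  assumes "s > 0" and "l < h"
  shows "filterlim (barrier_curvature s l h) at_top (at_left h)"
  unfolding barrier_curvature_def using assms by real_asymp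

theorem theorem2:
  fixes Cuu :: "real^'m^'m" and Cux :: "real^'n^'m"
    and Fu :: "real^'m^'n" and Fx :: "real^'n^'n" and S :: "real^'n^'n"
    and \<zeta> :: real and \<sigma> lo hi :: "'m \<Rightarrow> real" and Iu :: "'m set"
    and u :: "real^'m" and j :: 'm
  defines "K \<equiv> (\<lambda>v. gain (Q_uu Cuu (omega_uu \<sigma> Iu lo hi (upd_comp u j v)) Fu S) \<zeta>
                         (Q_ux Cux Fu S Fx))"
  assumes "\<zeta> \<ge> 0"
    and "\<And>i. i \<in> Iu \<Longrightarrow> \<sigma> i > 0"
    and "\<And>i. i \<in> Iu \<Longrightarrow> lo i < hi i"
    and "\<And>i. i \<in> Iu \<Longrightarrow> i \<noteq> j \<Longrightarrow> lo i < u $ i \<and> u $ i < hi i"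
    and "j \<in> Iu"
    and "eventually (\<lambda>v. pos_def (Q_uu Cuu (omega_uu \<sigma> Iu lo hi (upd_comp u j v)) Fu S
                                 + \<zeta> *\<^sub>R mat 1)) (at_right (lo j))"
    and "eventually (\<lambda>v. pos_def (Q_uu Cuu (omega_uu \<sigma> Iu lo hi (upd_comp u j v)) Fu S
                                 + \<zeta> *\<^sub>R mat 1)) (at_left (hi j))"
  shows "((\<lambda>v. K v $ j) \<longlongrightarrow> 0) (at_right (lo j)) \<and>
         ((\<lambda>v. K v $ j) \<longlongrightarrow> 0) (at_left (hi j))"
proof -
  define Quu where "Quu = Q_uu Cuu (omega_uu \<sigma> (Iu - {j}) lo hi u) Fu S"
  define w where "w = barrier_curvature (\<sigma> j) (lo j) (hi j)"
  have Q_uu_eq: "Q_uu Cuu (omega_uu \<sigma> Iu lo hi (upd_comp u j v)) Fu S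
                   = Quu + w v *\<^sub>R diag_unit_matrix j" for v
    using \<open>j \<in> Iu\<close> by (simp add: Quu_def w_def omega_uu_upd_comp Q_uu_def algebra_simps)
  \<comment> \<open>Positive definiteness at a single control value suffices, since the matrices differ
      from it only by a growing \<open>(j,j)\<close> entry.\<close>
  obtain v0 where "pos_def (Quu + w v0 *\<^sub>R diag_unit_matrix j + \<zeta> *\<^sub>R mat 1)"
    using eventually_happens'[OF _ assms(7)] by (auto simp: Q_uu_eq)
  then have "((\<lambda>v. K v $ j) \<longlongrightarrow> 0) F" if "filterlim w at_top F" for F
    unfolding K_def Q_uu_eq using that by (rule gain_row_tendsto_0)
  moreover have "\<sigma> j > 0" and "lo j < hi j"
    using assms(3,4) \<open>j \<in> Iu\<close> by auto
  ultimately show ?thesis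
    unfolding w_def
    by (simp add: barrier_curvature_at_lower_bound barrier_curvature_at_upper_bound)
qed

end
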